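(* Assume the operators $L_r:Lip_d(I)\to Lip_d(I)$, $r\in\mathbb{N}$, are uniformly bounded. Then the non-stationary fractal operator $\mathfrak{F}^\alpha_b:Lip_d(I)\to C(I)$, $\mathfrak{F}^\alpha_b(f)=f^\alpha_b$, is topologically bounded, i.e. it maps bounded sets to bounded sets.
   Context: Setting: $I=[x_0,x_N]$ with partition $\Delta: x_0<x_1<\dots<x_N$, $I_i=[x_{i-1},x_i]$, $l_i:I\to I_i$ the increasing affine bijection $l_i(x)=\frac{x_i-x_{i-1}}{x_N-x_0}x+\frac{x_Nx_{i-1}-x_0x_i}{x_N-x_0}$, and $Q_i=l_i^{-1}$. Scaling functions $\alpha_{i,r}:I\to\mathbb{R}$ ($i=1,\dots,N$, $r\in\mathbb{N}$) are continuous with $\|\alpha\|_\infty:=\sup_{r}\max_i\|\alpha_{i,r}\|_\infty<1$. $Lip_d(I)$ ($0<d\le1$) is the space of real functions $g$ on $I$ with $\sup_{x\ne y}|g(x)-g(y)|/|x-y|^d<\infty$, regarded as a subset of $C(I)$ with the supremum norm. $L_r:Lip_d(I)\to Lip_d(I)$ are operators (not necessarily linear) with $(L_rg)(x_0)=g(x_0)$, $(L_rg)(x_N)=g(x_N)$ for all $g$, and $\sup_r\|L_r\|_\infty<\infty$, where $\|L_r\|_\infty=\sup_{g\ne0}\|L_rg\|_\infty/\|g\|_\infty$. "Uniformly bounded" means: for every bounded $S\subset Lip_d(I)$, $\sup_r\sup_{g\in S}\|L_rg\|_\infty<\infty$. Non-stationary $\alpha$-fractal function: for $f\in C(I)$ and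 base functions $b_r\in C(I)$ with $b_r(x_0)=f(x_0)$, $b_r(x_N)=f(x_N)$, $\sup_r\|b_r\|_\infty<\infty$, let $C_f(I)=\{g\in C(I):g(x_0)=f(x_0),g(x_N)=f(x_N)\}$ and $T^{\alpha_r}:C_f(I)\to C_f(I)$, $(T^{\alpha_r}g)(x)=f(x)+\alpha_{i,r}(Q_i(x))(g-b_r)(Q_i(x))$ for $x\in I_i$. For every $g\in C_f(I)$, $T^{\alpha_1}\circ\cdots\circ T^{\alpha_r}g$ converges uniformly to a function independent of $g$; this is the non-stationary $\alpha$-fractal function. $f^\alpha_b$ denotes it for $f\in Lip_d(I)$ with $b_r=L_rf$. *)

theory Defs
  imports "HOL-Analysis.Analysis"
begin

text \<open>Partition xs 0 < xs 1 < ... < xs N of I = [xs 0, xs N].\<close>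

definition lip_space :: "real \<Rightarrow> real set \<Rightarrow> (real \<Rightarrow> real) set" where
  "lip_space d I = {g. \<exists>K. \<forall>x\<in>I. \<forall>y\<in>I. \<bar>g x - g y\<bar> \<le> K * \<bar>x - y\<bar> powr d}"

text \<open>The affine map l_i : I -> I_i and its inverse Q_i.\<close>
definition lmap :: "(nat \<Rightarrow> real) \<Rightarrow> nat \<Rightarrow> nat \<Rightarrow> real \<Rightarrow> real" where
  "lmap xs N i x = (xs i - xs (i - 1)) / (xs N - xs 0) * x
                   + (xs N * xs (i - 1) - xs 0 * xs i) / (xs N - xs 0)"

definition Qmap :: "(nat \<Rightarrow> real) \<Rightarrow> nat \<Rightarrow> nat \<Rightarrow> real \<Rightarrow> real" where
  "Qmap xs N i x = xs 0 + (xs N - xs 0) * (x - xs (i - 1)) / (xs i - xs (i - 1))"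

definition sub_index :: "(nat \<Rightarrow> real) \<Rightarrow> nat \<Rightarrow> real \<Rightarrow> nat" where
  "sub_index xs N x = (LEAST i. 1 \<le> i \<and> i \<le> N \<and> x \<le> xs i)"

text \<open>The RB operator T^{alpha_r} with germ f, base function b and scalings alpha_{i,r} = a i.\<close>
definition fractal_T :: "(nat \<Rightarrow> real) \<Rightarrow> nat \<Rightarrow> (real \<Rightarrow> real) \<Rightarrow> (real \<Rightarrow> real)
     \<Rightarrow> (nat \<Rightarrow> real \<Rightarrow> real) \<Rightarrow> (real \<Rightarrow> real) \<Rightarrow> real \<Rightarrow> real" where
  "fractal_T xs N f b a g x =
     (if x \<in> {xs 0..xs N} then
        (let i = sub_index xs N x; q = Qmap xs N i x in f x + a i q * (g q - b q))
      else f x)"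

text \<open>nsiter T r g = (T 1 o T 2 o ... o T r) g.\<close>
fun nsiter :: "(nat \<Rightarrow> ('a \<Rightarrow> 'a)) \<Rightarrow> nat \<Rightarrow> 'a \<Rightarrow> 'a" where
  "nsiter T 0 g = g"
| "nsiter T (Suc r) g = nsiter T r (T (Suc r) g)"

text \<open>Non-stationary alpha-fractal function f^alpha_b with b_r = L_r f, obtained as the
  limit of the iterates started at g = f (the limit is independent of the start).
  alpha i r is alpha_{i,r}.\<close>
definition ns_fractal :: "(nat \<Rightarrow> real) \<Rightarrow> nat \<Rightarrow> (nat \<Rightarrow> nat \<Rightarrow> real \<Rightarrow> real)
     \<Rightarrow> (nat \<Rightarrow> (real \<Rightarrow> real) \<Rightarrow> (real \<Rightarrow> real)) \<Rightarrow> (real \<Rightarrow> real) \<Rightarrow> real \<Rightarrow> real" where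
  "ns_fractal xs N alpha L f =
     (\<lambda>x. lim (\<lambda>r. nsiter (\<lambda>r. fractal_T xs N f (L r f) (\<lambda>i. alpha i r)) r f x))"

end

theory Submission imports Defs begin

(* Each operator T_r is a contraction for the supremum distance on I with factor
   s = sup |alpha| < 1, and T_r b_r = f on I, so T_r f moves f by at most s |f - L_r f|.
   Consecutive iterates therefore differ by at most s^r K with K = sup_r |f - L_r f|, and the
   limit f^alpha_b stays within s K / (1 - s) of f. On a bounded set S of germs the uniform
   boundedness of the L_r bounds K uniformly. *)

lemma lim_dist_le_geometric_increments:
  fixes u :: "nat \<Rightarrow> real"
  assumes s: "0 \<le> s" "s < 1"
    and incr: "\<And>k. \<bar>u (Suc k) - u k\<bar> \<le> s ^ k * K"
  shows "\<bar>lim u - u 0\<bar> \<le> K / (1 - s)"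
proof -
  define du where "du k = u (Suc k) - u k" for k
  have geom: "summable (\<lambda>k. s ^ k * K)"
    using s by (intro summable_mult2 summable_geometric) auto
  have abs_du: "summable (\<lambda>k. \<bar>du k\<bar>)"
    by (rule summable_comparison_test[OF _ geom]) (use incr du_def in auto)
  then have "(\<lambda>n. \<Sum>k<n. du k) \<longlonglongrightarrow> suminf du"
    using summable_LIMSEQ summable_rabs_cancel by blast
  moreover have "(\<Sum>k<n. du k) = u n - u 0" for n
    unfolding du_def by (rule sum_lessThan_telescope)
  ultimately have "(\<lambda>n. u n - u 0 + u 0) \<longlonglongrightarrow> suminf du + u 0"
    by (intro tendsto_add) auto
  then have u_lim: "u \<longlonglongrightarrow> suminf du + u 0"
    by simp
  have "\<bar>suminf du\<bar> \<le> (\<Sum>k. \<bar>du k\<bar>)"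
    by (rule summable_rabs[OF abs_du])
  also have "\<dots> \<le> (\<Sum>k. s ^ k * K)"
    by (rule suminf_le[OF _ abs_du geom]) (use incr du_def in auto)
  also have "\<dots> = K / (1 - s)"
    using s by (simp add: suminf_mult2[symmetric] suminf_geometric)
  finally show ?thesis
    unfolding limI[OF u_lim] by simp
qed

lemma nsiter_dist_le:
  assumes contr: "\<And>k g h D x. 1 \<le> k \<Longrightarrow> \<forall>y\<in>I. \<bar>g y - h y\<bar> \<le> D \<Longrightarrow> x \<in> I \<Longrightarrow>
      \<bar>T k g x - T k h x\<bar> \<le> s * (D::real)"
  shows "\<forall>y\<in>I. \<bar>g y - h y\<bar> \<le> D \<Longrightarrow> x \<in> I \<Longrightarrow>
      \<bar>nsiter T r g x - nsiter T r h x\<bar> \<le> s ^ r * D"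
proof (induction r arbitrary: g h D x)
  case 0
  then show ?case by simp
next
  case (Suc r)
  have "\<forall>y\<in>I. \<bar>T (Suc r) g y - T (Suc r) h y\<bar> \<le> s * D"
    using contr Suc.prems by auto
  from Suc.IH[OF this Suc.prems(2)] show ?case
    by (simp add: ac_simps)
qed

lemma nsiter_lim_dist_le:
  assumes s: "0 \<le> s" "s < 1"
    and contr: "\<And>k g h D x. 1 \<le> k \<Longrightarrow> \<forall>y\<in>I. \<bar>g y - h y\<bar> \<le> D \<Longrightarrow> x \<in> I \<Longrightarrow>
      \<bar>T k g x - T k h x\<bar> \<le> s * (D::real)"
    and move: "\<And>k y. 1 \<le> k \<Longrightarrow> y \<in> I \<Longrightarrow> \<bar>T k f y - f y\<bar> \<le> K"
    and x: "x \<in> I"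
  shows "\<bar>lim (\<lambda>r. nsiter T r f x) - f x\<bar> \<le> K / (1 - s)"
proof -
  have "\<bar>nsiter T k (T (Suc k) f) x - nsiter T k f x\<bar> \<le> s ^ k * K" for k
    by (rule nsiter_dist_le[where I = I]) (use contr move x in auto)
  then show ?thesis
    using lim_dist_le_geometric_increments[OF s, of "\<lambda>r. nsiter T r f x" K] by simp
qed

locale interval_partition =
  fixes xs :: "nat \<Rightarrow> real" and N :: nat
  assumes N_pos: "1 \<le> N"
    and xs_step: "\<And>i. i < N \<Longrightarrow> xs i < xs (Suc i)"
begin

lemma xs_less: "i < j \<Longrightarrow> j \<le> N \<Longrightarrow> xs i < xs j"
proof (induction j)
  case 0
  then show ?case by simp
next
  case (Suc j)
  then show ?case
    using xs_step[of j] by (metis Suc_le_lessD less_Suc_eq order.strict_trans order_less_imp_le)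
qed

lemma xs_0_less_N: "xs 0 < xs N"
  using xs_less[of 0 N] N_pos by simp

lemma sub_index_bounds:
  assumes "x \<in> {xs 0..xs N}"
  shows "1 \<le> sub_index xs N x" "sub_index xs N x \<le> N"
    "xs (sub_index xs N x - 1) \<le> x" "x \<le> xs (sub_index xs N x)"
proof -
  let ?P = "\<lambda>i. 1 \<le> i \<and> i \<le> N \<and> x \<le> xs i"
  define i where "i = sub_index xs N x"
  have "?P i"
    unfolding i_def sub_index_def by (rule LeastI[of ?P N]) (use N_pos assms in auto)
  then show "1 \<le> sub_index xs N x" "sub_index xs N x \<le> N" "x \<le> xs (sub_index xs N x)"
    unfolding i_def by auto
  show "xs (sub_index xs N x - 1) \<le> x"
  proof (cases "i = 1")
    case True
    then show ?thesis using assms i_def by simp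
  next
    case False
    then have "\<not> ?P (i - 1)"
      using \<open>?P i\<close> not_less_Least[of "i - 1" ?P] unfolding i_def sub_index_def by simp
    then show ?thesis using \<open>?P i\<close> False i_def by auto
  qed
qed

lemma Qmap_sub_index_mem:
  assumes x: "x \<in> {xs 0..xs N}"
  shows "Qmap xs N (sub_index xs N x) x \<in> {xs 0..xs N}"
proof -
  define i where "i = sub_index xs N x"
  define t where "t = (x - xs (i - 1)) / (xs i - xs (i - 1))"
  have "xs (i - 1) < xs i"
    using xs_less[of "i - 1" i] sub_index_bounds[OF x] unfolding i_def by simp
  then have "0 \<le> t" "t \<le> 1"
    using sub_index_bounds[OF x] unfolding t_def i_def by auto
  then have "0 \<le> (xs N - xs 0) * t" "(xs N - xs 0) * t \<le> xs N - xs 0"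
    using xs_0_less_N mult_left_le[of t "xs N - xs 0"] by auto
  moreover have "Qmap xs N i x = xs 0 + (xs N - xs 0) * t"
    unfolding Qmap_def t_def by simp
  ultimately show ?thesis
    unfolding i_def by auto
qed

text \<open>Everything used about the partition and the maps Q_i is packed into this normal form.\<close>
lemma fractal_T_local_form:
  assumes "x \<in> {xs 0..xs N}"
  obtains i q where "i \<in> {1..N}" "q \<in> {xs 0..xs N}"
    "\<And>g. fractal_T xs N f b a g x = f x + a i q * (g q - b q)"
  using assms sub_index_bounds[OF assms] Qmap_sub_index_mem[OF assms]
  unfolding fractal_T_def Let_def by auto

lemma fractal_T_base:
  assumes "x \<in> {xs 0..xs N}"
  shows "fractal_T xs N f b a b x = f x"
proof -
  obtain i q where "\<And>g. fractal_T xs N f b a g x = f x + a i q * (g q - b q)"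
    using fractal_T_local_form[OF assms, where f = f and b = b and a = a] by blast
  then show ?thesis by simp
qed

lemma fractal_T_dist_le:
  assumes a: "\<forall>i\<in>{1..N}. \<forall>y\<in>{xs 0..xs N}. \<bar>a i y\<bar> \<le> s"
    and gh: "\<forall>y\<in>{xs 0..xs N}. \<bar>g y - h y\<bar> \<le> D"
    and x: "x \<in> {xs 0..xs N}"
  shows "\<bar>fractal_T xs N f b a g x - fractal_T xs N f b a h x\<bar> \<le> s * D"
proof -
  obtain i q where iq: "i \<in> {1..N}" "q \<in> {xs 0..xs N}"
    and T: "\<And>g. fractal_T xs N f b a g x = f x + a i q * (g q - b q)"
    using fractal_T_local_form[OF x, where f = f and b = b and a = a] by blast
  have "\<bar>fractal_T xs N f b a g x - fractal_T xs N f b a h x\<bar> = \<bar>a i q\<bar> * \<bar>g q - h q\<bar>"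
    unfolding T by (simp add: algebra_simps flip: abs_mult)
  also have "\<dots> \<le> s * D"
  proof -
    have "\<bar>a i q\<bar> \<le> s" "\<bar>g q - h q\<bar> \<le> D"
      using a gh iq by auto
    then show ?thesis
      by (intro mult_mono) (auto intro: order_trans[OF abs_ge_zero])
  qed
  finally show ?thesis .
qed

lemma ns_fractal_dist_le:
  assumes s: "0 \<le> s" "s < 1"
    and alpha: "\<forall>r\<ge>1. \<forall>i\<in>{1..N}. \<forall>y\<in>{xs 0..xs N}. \<bar>alpha i r y\<bar> \<le> s"
    and L: "\<And>r y. 1 \<le> r \<Longrightarrow> y \<in> {xs 0..xs N} \<Longrightarrow> \<bar>f y - L r f y\<bar> \<le> K"
    and x: "x \<in> {xs 0..xs N}"
  shows "\<bar>ns_fractal xs N alpha L f x - f x\<bar> \<le> s * K / (1 - s)"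
proof -
  define T where "T r = fractal_T xs N f (L r f) (\<lambda>i. alpha i r)" for r
  have contr: "\<bar>T k g y - T k h y\<bar> \<le> s * D"
    if "1 \<le> k" "\<forall>y\<in>{xs 0..xs N}. \<bar>g y - h y\<bar> \<le> D" "y \<in> {xs 0..xs N}" for k g h D y
    unfolding T_def by (rule fractal_T_dist_le) (use alpha that in auto)
  have "\<bar>T k f y - f y\<bar> \<le> s * K" if "1 \<le> k" "y \<in> {xs 0..xs N}" for k y
    using contr[OF that(1) _ that(2), of f "L k f" K] L[OF that(1)] fractal_T_base[OF that(2)]
    unfolding T_def by simp
  from nsiter_lim_dist_le[where T = T and f = f, OF s contr this x] show ?thesis
    unfolding ns_fractal_def T_def by simp
qed

end

theorem mainTheorem5:
  fixes xs :: "nat \<Rightarrow> real" and N :: nat and d :: real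
    and alpha :: "nat \<Rightarrow> nat \<Rightarrow> real \<Rightarrow> real"
    and L :: "nat \<Rightarrow> (real \<Rightarrow> real) \<Rightarrow> (real \<Rightarrow> real)"
  assumes N: "1 \<le> N"
    and part: "\<And>i. i < N \<Longrightarrow> xs i < xs (Suc i)"
    and d: "0 < d" "d \<le> 1"
    and alpha_cont: "\<And>i r. 1 \<le> i \<Longrightarrow> i \<le> N \<Longrightarrow> 1 \<le> r \<Longrightarrow>
                        continuous_on {xs 0..xs N} (alpha i r)"
    and alpha_norm: "\<exists>s<1. \<forall>r\<ge>1. \<forall>i\<in>{1..N}. \<forall>x\<in>{xs 0..xs N}. \<bar>alpha i r x\<bar> \<le> s"
    and L_maps: "\<And>r g. 1 \<le> r \<Longrightarrow> g \<in> lip_space d {xs 0..xs N} \<Longrightarrow>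
                    L r g \<in> lip_space d {xs 0..xs N}"
    and L_left: "\<And>r g. 1 \<le> r \<Longrightarrow> g \<in> lip_space d {xs 0..xs N} \<Longrightarrow> L r g (xs 0) = g (xs 0)"
    and L_right: "\<And>r g. 1 \<le> r \<Longrightarrow> g \<in> lip_space d {xs 0..xs N} \<Longrightarrow> L r g (xs N) = g (xs N)"
    and L_norm: "\<exists>M. \<forall>r\<ge>1. \<forall>g\<in>lip_space d {xs 0..xs N}.
                   (\<exists>x\<in>{xs 0..xs N}. g x \<noteq> 0) \<longrightarrow>
                   (\<forall>x\<in>{xs 0..xs N}. \<bar>L r g x\<bar> \<le> M * (SUP y\<in>{xs 0..xs N}. \<bar>g y\<bar>))"
    and L_unif: "\<And>S. S \<subseteq> lip_space d {xs 0..xs N} \<Longrightarrow>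
                   (\<exists>B. \<forall>g\<in>S. \<forall>x\<in>{xs 0..xs N}. \<bar>g x\<bar> \<le> B) \<Longrightarrow>
                   (\<exists>C. \<forall>r\<ge>1. \<forall>g\<in>S. \<forall>x\<in>{xs 0..xs N}. \<bar>L r g x\<bar> \<le> C)"
  shows "\<forall>S. S \<subseteq> lip_space d {xs 0..xs N} \<longrightarrow>
           (\<exists>B. \<forall>g\<in>S. \<forall>x\<in>{xs 0..xs N}. \<bar>g x\<bar> \<le> B) \<longrightarrow>
           (\<exists>C. \<forall>f\<in>S. \<forall>x\<in>{xs 0..xs N}. \<bar>ns_fractal xs N alpha L f x\<bar> \<le> C)"
proof (intro allI impI)
  interpret interval_partition xs N
    using N part by unfold_locales
  fix S assume S_lip: "S \<subseteq> lip_space d {xs 0..xs N}"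
    and S_bdd: "\<exists>B. \<forall>g\<in>S. \<forall>x\<in>{xs 0..xs N}. \<bar>g x\<bar> \<le> B"
  obtain B where B: "\<forall>g\<in>S. \<forall>x\<in>{xs 0..xs N}. \<bar>g x\<bar> \<le> B"
    using S_bdd by blast
  obtain C where C: "\<forall>r\<ge>1. \<forall>g\<in>S. \<forall>x\<in>{xs 0..xs N}. \<bar>L r g x\<bar> \<le> C"
    using L_unif[OF S_lip S_bdd] by blast
  obtain s where s: "s < 1" and alpha: "\<forall>r\<ge>1. \<forall>i\<in>{1..N}. \<forall>x\<in>{xs 0..xs N}. \<bar>alpha i r x\<bar> \<le> s"
    using alpha_norm by blast
  have "0 \<le> s"
    using alpha[rule_format, of 1 1 "xs 0"] N xs_0_less_N by force
  have "\<bar>ns_fractal xs N alpha L f x\<bar> \<le> B + s * (B + C) / (1 - s)"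
    if f: "f \<in> S" and x: "x \<in> {xs 0..xs N}" for f x
  proof -
    have germ_base: "\<bar>f y - L r f y\<bar> \<le> B + C" if "1 \<le> r" "y \<in> {xs 0..xs N}" for r y
    proof -
      have "\<bar>f y\<bar> \<le> B" "\<bar>L r f y\<bar> \<le> C"
        using B C f that by auto
      then show ?thesis
        using abs_triangle_ineq4[of "f y" "L r f y"] by linarith
    qed
    have "\<bar>ns_fractal xs N alpha L f x - f x\<bar> \<le> s * (B + C) / (1 - s)"
      by (rule ns_fractal_dist_le[OF \<open>0 \<le> s\<close> s alpha]) (use germ_base x in auto)
    then show ?thesis
      using B f x by fastforce
  qed
  then show "\<exists>C. \<forall>f\<in>S. \<forall>x\<in>{xs 0..xs N}. \<bar>ns_fractal xs N alpha L f x\<bar> \<le> C"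
    by blast
qed

end
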